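(* Let $F$ be a field, $A$ a finitely generated free abelian group, $F * A$ a twisted group algebra, and $A'<A$ a subgroup of finite index in $A$. Then $\dim(F * A')=\dim(F * A)$.
   Context: A twisted group algebra $F * A$ is an $F$-algebra with $F$-basis $\{\bar a: a\in A\}$ and $\bar a_1\bar a_2=\tau(a_1,a_2)\overline{a_1a_2}$, $\tau$ a 2-cocycle with values in $F\setminus\{0\}$; $F * A'$ is the subalgebra spanned by $\bar a$, $a\in A'$. $\dim$ denotes the Krull dimension, which for these algebras coincides with the global dimension. *)

theory Defs
  imports Main "HOL-Library.Extended_Nat"
begin

text \<open>The free abelian group Z^n, realised as integer vectors supported on {0..<n}.\<close>
type_synonym zvec = "nat \<Rightarrow> int"

definition Zn :: "nat \<Rightarrow> zvec set" where
  "Zn n = {v. \<forall>i\<ge>n. v i = 0}"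

definition vzero :: zvec where "vzero = (\<lambda>_. 0)"
definition vadd :: "zvec \<Rightarrow> zvec \<Rightarrow> zvec" where "vadd a b = (\<lambda>i. a i + b i)"
definition vneg :: "zvec \<Rightarrow> zvec" where "vneg a = (\<lambda>i. - a i)"

definition subgroup_of :: "zvec set \<Rightarrow> zvec set \<Rightarrow> bool" where
  "subgroup_of A H \<longleftrightarrow> H \<subseteq> A \<and> vzero \<in> H \<and>
     (\<forall>a\<in>H. \<forall>b\<in>H. vadd a b \<in> H) \<and> (\<forall>a\<in>H. vneg a \<in> H)"

definition finite_index :: "zvec set \<Rightarrow> zvec set \<Rightarrow> bool" where
  "finite_index A H \<longleftrightarrow> finite ((\<lambda>a. {vadd a h | h. h \<in> H}) ` A)"

definition two_cocycle :: "zvec set \<Rightarrow> (zvec \<Rightarrow> zvec \<Rightarrow> 'k::field) \<Rightarrow> bool" where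
  "two_cocycle A \<tau> \<longleftrightarrow> (\<forall>a\<in>A. \<forall>b\<in>A. \<tau> a b \<noteq> 0) \<and>
     (\<forall>a\<in>A. \<forall>b\<in>A. \<forall>c\<in>A. \<tau> a b * \<tau> (vadd a b) c = \<tau> a (vadd b c) * \<tau> b c)"

text \<open>Twisted group algebra F * S: finitely supported functions S \<rightarrow> F
  (x corresponds to the sum of x a times bar a), with twisted convolution.\<close>
definition supp :: "(zvec \<Rightarrow> 'k::field) \<Rightarrow> zvec set" where
  "supp x = {a. x a \<noteq> 0}"

definition TGA :: "zvec set \<Rightarrow> (zvec \<Rightarrow> 'k::field) set" where
  "TGA S = {x. finite (supp x) \<and> supp x \<subseteq> S}"

definition tzero :: "zvec \<Rightarrow> 'k::field" where "tzero = (\<lambda>_. 0)"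
definition tadd :: "(zvec \<Rightarrow> 'k::field) \<Rightarrow> (zvec \<Rightarrow> 'k) \<Rightarrow> zvec \<Rightarrow> 'k" where
  "tadd x y = (\<lambda>a. x a + y a)"
definition tneg :: "(zvec \<Rightarrow> 'k::field) \<Rightarrow> zvec \<Rightarrow> 'k" where
  "tneg x = (\<lambda>a. - x a)"

definition tmul :: "(zvec \<Rightarrow> zvec \<Rightarrow> 'k::field) \<Rightarrow> (zvec \<Rightarrow> 'k) \<Rightarrow> (zvec \<Rightarrow> 'k) \<Rightarrow> zvec \<Rightarrow> 'k" where
  "tmul \<tau> x y = (\<lambda>c. \<Sum>(a,b) \<in> {p \<in> supp x \<times> supp y. vadd (fst p) (snd p) = c}.
                        x a * y b * \<tau> a b)"

definition rideal :: "zvec set \<Rightarrow> (zvec \<Rightarrow> zvec \<Rightarrow> 'k::field) \<Rightarrow> (zvec \<Rightarrow> 'k) set \<Rightarrow> bool" where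
  "rideal S \<tau> I \<longleftrightarrow> I \<subseteq> TGA S \<and> tzero \<in> I \<and>
     (\<forall>x\<in>I. \<forall>y\<in>I. tadd x y \<in> I) \<and> (\<forall>x\<in>I. tneg x \<in> I) \<and>
     (\<forall>x\<in>I. \<forall>r\<in>TGA S. tmul \<tau> x r \<in> I)"

text \<open>Deviation (Gabriel-Rentschler) of intervals [b,a] in the lattice of right ideals:
  devlt S \<tau> k b a  means  dev [b,a] < k  (with dev = -\<infinity> for trivial intervals).
  dev[b,a] \<le> k iff for every descending chain of right ideals between a and b,
  all but finitely many factors have deviation < k.\<close>
primrec devlt :: "zvec set \<Rightarrow> (zvec \<Rightarrow> zvec \<Rightarrow> 'k::field) \<Rightarrow> nat \<Rightarrow>
                   (zvec \<Rightarrow> 'k) set \<Rightarrow> (zvec \<Rightarrow> 'k) set \<Rightarrow> bool" where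
  "devlt S \<tau> 0 b a = (b = a)"
| "devlt S \<tau> (Suc k) b a =
     (\<forall>c :: nat \<Rightarrow> (zvec \<Rightarrow> 'k) set.
        (\<forall>i. rideal S \<tau> (c i) \<and> b \<subseteq> c i \<and> c i \<subseteq> a \<and> c (Suc i) \<subseteq> c i) \<longrightarrow>
        (\<exists>N. \<forall>i\<ge>N. devlt S \<tau> k (c (Suc i)) (c i)))"

definition Kdim :: "zvec set \<Rightarrow> (zvec \<Rightarrow> zvec \<Rightarrow> 'k::field) \<Rightarrow> enat" where
  "Kdim S \<tau> = (if \<exists>k. devlt S \<tau> (Suc k) {tzero} (TGA S)
               then enat (LEAST k. devlt S \<tau> (Suc k) {tzero} (TGA S)) else \<infinity>)"

end

theory Submission
  imports Defs "HOL-Library.Function_Algebras"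
begin

text \<open>
  The Krull dimension of \<open>F * S\<close> is the deviation of the lattice of right ideals of \<open>F * S\<close>, and
  a map of lattices that is monotone and injective on comparable pairs can only lower deviation.

  Extension \<open>I \<mapsto> I \<cdot> (F * A)\<close> is such a map from the right ideals of \<open>F * A'\<close> to those of
  \<open>F * A\<close>, because \<open>I \<cdot> (F * A) \<inter> F * A' = I\<close>. Conversely, let \<open>r\<^sub>1, \<dots>, r\<^sub>m\<close> represent the
  cosets of \<open>A'\<close>. Filtering \<open>F * A\<close> by support on \<open>r\<^sub>j + A', \<dots>, r\<^sub>m + A'\<close> and taking the
  coefficient of \<open>bar r\<^sub>j\<close> sends a right ideal \<open>J\<close> of \<open>F * A\<close> to right ideals \<open>L\<^sub>j J\<close> of
  \<open>F * A'\<close>; the map \<open>J \<mapsto> (L\<^sub>1 J, \<dots>, L\<^sub>m J)\<close> is monotone and injective on comparable pairs,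
  and the deviation of a product of \<open>m\<close> lattices is the maximum of those of its factors.
\<close>

section \<open>Deviation of families of sets\<close>

primrec dev_lt :: "'x set set \<Rightarrow> nat \<Rightarrow> 'x set \<Rightarrow> 'x set \<Rightarrow> bool" where
  "dev_lt P 0 b a \<longleftrightarrow> b = a"
| "dev_lt P (Suc k) b a \<longleftrightarrow>
     (\<forall>c :: nat \<Rightarrow> 'x set. (\<forall>i. c i \<in> P \<and> b \<subseteq> c i \<and> c i \<subseteq> a \<and> c (Suc i) \<subseteq> c i) \<longrightarrow>
        (\<exists>N. \<forall>i\<ge>N. dev_lt P k (c (Suc i)) (c i)))"

lemma devlt_eq_dev_lt: "devlt S \<tau> k b a = dev_lt {I. rideal S \<tau> I} k b a"
  by (induction k arbitrary: b a) auto

lemma dev_lt_pullback: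
  assumes maps: "\<And>x. x \<in> P \<Longrightarrow> f x \<in> Q"
    and mono: "\<And>x y. x \<in> P \<Longrightarrow> y \<in> P \<Longrightarrow> x \<subseteq> y \<Longrightarrow> f x \<subseteq> f y"
    and inj: "\<And>x y. x \<in> P \<Longrightarrow> y \<in> P \<Longrightarrow> x \<subseteq> y \<Longrightarrow> f x = f y \<Longrightarrow> x = y"
    and "b \<in> P" "a \<in> P" "b \<subseteq> a" "dev_lt Q k (f b) (f a)"
  shows "dev_lt P k b a"
  using assms(4-)
proof (induction k arbitrary: b a)
  case 0
  then show ?case using inj by simp
next
  case (Suc k)
  show ?case unfolding dev_lt.simps
  proof (intro allI impI)
    fix c :: "nat \<Rightarrow> _"
    assume chain: "\<forall>i. c i \<in> P \<and> b \<subseteq> c i \<and> c i \<subseteq> a \<and> c (Suc i) \<subseteq> c i"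
    then have "\<forall>i. f (c i) \<in> Q \<and> f b \<subseteq> f (c i) \<and> f (c i) \<subseteq> f a \<and> f (c (Suc i)) \<subseteq> f (c i)"
      using Suc.prems maps mono by blast
    then obtain N where "\<forall>i\<ge>N. dev_lt Q k (f (c (Suc i))) (f (c i))"
      using Suc.prems(4)[unfolded dev_lt.simps, rule_format, of "\<lambda>i. f (c i)"] by blast
    then show "\<exists>N. \<forall>i\<ge>N. dev_lt P k (c (Suc i)) (c i)"
      using chain Suc.IH by blast
  qed
qed

definition fiber :: "(nat \<times> 'x) set \<Rightarrow> nat \<Rightarrow> 'x set" where
  "fiber X j = {y. (j, y) \<in> X}"

lemma dev_lt_product:
  assumes "X \<subseteq> {..<m} \<times> UNIV" "Y \<subseteq> {..<m} \<times> UNIV" "\<forall>j<m. dev_lt P k (fiber X j) (fiber Y j)"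
  shows "dev_lt {X. X \<subseteq> {..<m} \<times> UNIV \<and> (\<forall>j<m. fiber X j \<in> P)} k X Y"
  using assms
proof (induction k arbitrary: X Y)
  case 0
  then show ?case by (auto simp: fiber_def set_eq_iff)
next
  case (Suc k)
  let ?Q = "{X. X \<subseteq> {..<m} \<times> UNIV \<and> (\<forall>j<m. fiber X j \<in> P)}"
  show ?case unfolding dev_lt.simps
  proof (intro allI impI)
    fix C :: "nat \<Rightarrow> _"
    assume chain: "\<forall>i. C i \<in> ?Q \<and> X \<subseteq> C i \<and> C i \<subseteq> Y \<and> C (Suc i) \<subseteq> C i"
    have "\<exists>N. \<forall>i\<ge>N. dev_lt P k (fiber (C (Suc i)) j) (fiber (C i) j)" if j: "j < m" for j
    proof -
      have "\<forall>i. fiber (C i) j \<in> P \<and> fiber X j \<subseteq> fiber (C i) j \<and> fiber (C i) j \<subseteq> fiber Y j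
                \<and> fiber (C (Suc i)) j \<subseteq> fiber (C i) j"
        using chain j unfolding fiber_def by blast
      moreover have "dev_lt P (Suc k) (fiber X j) (fiber Y j)"
        using Suc.prems(3) j by blast
        ultimately show ?thesis
        unfolding dev_lt.simps by (rule spec[of _ "\<lambda>i. fiber (C i) j", THEN mp, rotated])
    qed
    then obtain N where N: "\<forall>j<m. \<forall>i\<ge>N j. dev_lt P k (fiber (C (Suc i)) j) (fiber (C i) j)"
      by metis
    have "dev_lt ?Q k (C (Suc i)) (C i)" if i: "i \<ge> (\<Sum>j<m. N j)" for i
    proof -
      have "N j \<le> i" if "j < m" for j
        using that i member_le_sum[of j "{..<m}" N] by simp
      then show ?thesis
        using chain N by (intro Suc.IH) auto
    qed
    then show "\<exists>N. \<forall>i\<ge>N. dev_lt ?Q k (C (Suc i)) (C i)" by blast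
  qed
qed

section \<open>Twisted group algebras\<close>

lemma vector_ops_eq [simp]: "vzero = 0" "vadd a b = a + b" "vneg a = - a"
  by (simp_all add: vzero_def vadd_def vneg_def fun_eq_iff)

lemma algebra_ops_eq [simp]: "tzero = 0" "tadd x y = x + y" "tneg x = - x"
  by (simp_all add: tzero_def tadd_def tneg_def fun_eq_iff)

definition vgroup :: "zvec set \<Rightarrow> bool" where
  "vgroup G \<longleftrightarrow> 0 \<in> G \<and> (\<forall>a\<in>G. \<forall>b\<in>G. a + b \<in> G) \<and> (\<forall>a\<in>G. - a \<in> G)"

lemma vgroupD:
  assumes "vgroup G"
  shows "0 \<in> G" "a \<in> G \<Longrightarrow> b \<in> G \<Longrightarrow> a + b \<in> G" "a \<in> G \<Longrightarrow> - a \<in> G"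
    "a \<in> G \<Longrightarrow> b \<in> G \<Longrightarrow> a - b \<in> G"
  using assms unfolding vgroup_def diff_conv_add_uminus by blast+

lemma vgroup_Zn: "vgroup (Zn n)"
  by (simp add: vgroup_def Zn_def)

lemma subgroup_of_iff: "subgroup_of G H \<longleftrightarrow> H \<subseteq> G \<and> vgroup H"
  by (simp add: subgroup_of_def vgroup_def)

definition smul :: "'k::field \<Rightarrow> (zvec \<Rightarrow> 'k) \<Rightarrow> zvec \<Rightarrow> 'k" where
  "smul \<alpha> x = (\<lambda>c. \<alpha> * x c)"

definition rmul_basis :: "(zvec \<Rightarrow> zvec \<Rightarrow> 'k::field) \<Rightarrow> zvec \<Rightarrow> (zvec \<Rightarrow> 'k) \<Rightarrow> zvec \<Rightarrow> 'k" where
  "rmul_basis \<tau> b x = (\<lambda>c. x (c - b) * \<tau> (c - b) b)"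

definition lmul_basis :: "(zvec \<Rightarrow> zvec \<Rightarrow> 'k::field) \<Rightarrow> zvec \<Rightarrow> (zvec \<Rightarrow> 'k) \<Rightarrow> zvec \<Rightarrow> 'k" where
  "lmul_basis \<tau> r x = (\<lambda>c. x (c - r) * \<tau> r (c - r))"

definition basis_vec :: "'k::field \<Rightarrow> zvec \<Rightarrow> zvec \<Rightarrow> 'k" where
  "basis_vec \<alpha> b = (\<lambda>c. if c = b then \<alpha> else 0)"

lemma sum_fun_apply: "(\<Sum>b\<in>B. f b) c = (\<Sum>b\<in>B. f b c)"
  by (induction B rule: infinite_finite_induct) auto

lemma tmul_eq_sum_rmul_basis:
  assumes "finite (supp x)" "finite (supp y)"
  shows "tmul \<tau> x y = (\<Sum>b\<in>supp y. smul (y b) (rmul_basis \<tau> b x))"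
proof
  fix c
  let ?f = "\<lambda>a b. if a + b = c then x a * y b * \<tau> a b else 0"
  have "tmul \<tau> x y c = (\<Sum>(a, b)\<in>supp x \<times> supp y. ?f a b)"
    unfolding tmul_def using assms
    by (simp add: sum.inter_filter[symmetric] case_prod_unfold cond_case_prod_eta)
  also have "\<dots> = (\<Sum>b\<in>supp y. \<Sum>a\<in>supp x. ?f a b)"
    by (simp add: sum.cartesian_product[symmetric] sum.swap[of _ "supp x"])
  also have "\<dots> = (\<Sum>b\<in>supp y. smul (y b) (rmul_basis \<tau> b x) c)"
  proof (rule sum.cong)
    fix b
    have "(\<Sum>a\<in>supp x. ?f a b) = (\<Sum>a\<in>supp x. if a = c - b then x a * y b * \<tau> a b else 0)"
      by (intro sum.cong) (auto simp: algebra_simps)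
    then show "(\<Sum>a\<in>supp x. ?f a b) = smul (y b) (rmul_basis \<tau> b x) c"
      using assms by (simp add: sum.delta' smul_def rmul_basis_def supp_def)
  qed simp
  finally show "tmul \<tau> x y c = (\<Sum>b\<in>supp y. smul (y b) (rmul_basis \<tau> b x)) c"
    by (simp add: sum_fun_apply)
qed

lemma tmul_basis_vec:
  assumes "finite (supp x)"
  shows "tmul \<tau> x (basis_vec \<alpha> b) = smul \<alpha> (rmul_basis \<tau> b x)"
proof -
  have "supp (basis_vec \<alpha> b) = (if \<alpha> = 0 then {} else {b})"
    by (auto simp: supp_def basis_vec_def)
  then show ?thesis
    using assms by (auto simp: tmul_eq_sum_rmul_basis basis_vec_def smul_def fun_eq_iff)
qed

lemma zero_in_TGA: "0 \<in> TGA S"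
  by (simp add: TGA_def supp_def)

text \<open>Closure under the right action of \<open>F * B\<close>, which is generated by the scalars and the
  \<open>bar b\<close> with \<open>b \<in> B\<close>; the set \<open>M\<close> may live in a larger algebra \<open>F * G\<close>.\<close>
definition rsubmodule :: "zvec set \<Rightarrow> (zvec \<Rightarrow> zvec \<Rightarrow> 'k::field) \<Rightarrow> (zvec \<Rightarrow> 'k) set \<Rightarrow> bool" where
  "rsubmodule B \<tau> M \<longleftrightarrow> 0 \<in> M \<and> (\<forall>x\<in>M. \<forall>y\<in>M. x + y \<in> M) \<and> (\<forall>x\<in>M. \<forall>\<alpha>. smul \<alpha> x \<in> M)
     \<and> (\<forall>x\<in>M. \<forall>b\<in>B. rmul_basis \<tau> b x \<in> M)"

lemma rsubmodule_sum:
  assumes "rsubmodule B \<tau> M" "\<And>b. b \<in> S \<Longrightarrow> f b \<in> M"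
  shows "(\<Sum>b\<in>S. f b) \<in> M"
  using assms(2)
proof (induction S rule: infinite_finite_induct)
  case (insert b S)
  then have "f b + (\<Sum>b\<in>S. f b) \<in> M"
    using assms(1) unfolding rsubmodule_def by blast
  moreover have "(\<Sum>b\<in>insert b S. f b) = f b + (\<Sum>b\<in>S. f b)"
    by (rule sum.insert[OF insert.hyps])
  ultimately show ?case by (simp only:)
qed (use assms(1) in \<open>simp_all add: rsubmodule_def\<close>)

lemma rsubmodule_diff:
  assumes "rsubmodule B \<tau> M" "x \<in> M" "y \<in> M"
  shows "x - y \<in> M"
proof -
  have "x + smul (- 1) y \<in> M"
    using assms unfolding rsubmodule_def by blast
  moreover have "x + smul (- 1) y = x - y"
    by (simp add: smul_def fun_eq_iff)
  ultimately show ?thesis by simp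
qed

lemma rsubmodule_Int: "rsubmodule B \<tau> M \<Longrightarrow> rsubmodule B \<tau> N \<Longrightarrow> rsubmodule B \<tau> (M \<inter> N)"
  by (simp add: rsubmodule_def)

lemma rsubmodule_mono: "rsubmodule B \<tau> M \<Longrightarrow> B' \<subseteq> B \<Longrightarrow> rsubmodule B' \<tau> M"
  by (auto simp: rsubmodule_def)

lemma rsubmodule_image:
  assumes "rsubmodule B \<tau> M" "f 0 = 0" "\<And>x y. f (x + y) = f x + f y" "\<And>\<alpha> x. f (smul \<alpha> x) = smul \<alpha> (f x)"
    "\<And>b x. b \<in> B \<Longrightarrow> f (rmul_basis \<tau> b x) = rmul_basis \<tau> b (f x)"
  shows "rsubmodule B \<tau> (f ` M)"
  unfolding rsubmodule_def
proof (intro conjI ballI allI)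
  show "0 \<in> f ` M"
    using assms(1,2) by (metis image_eqI rsubmodule_def)
  fix u v \<alpha> b assume "u \<in> f ` M" "v \<in> f ` M"
  then obtain x y where xy: "x \<in> M" "y \<in> M" "u = f x" "v = f y" by blast
  then show "u + v \<in> f ` M" "smul \<alpha> u \<in> f ` M"
    using assms(1,3,4) unfolding rsubmodule_def by (metis image_eqI)+
  assume "b \<in> B"
  then show "rmul_basis \<tau> b u \<in> f ` M"
    using xy assms(1,5) unfolding rsubmodule_def by (metis image_eqI)
qed

lemma supp_add: "supp (x + y) \<subseteq> supp x \<union> supp y"
  by (auto simp: supp_def)

lemma supp_smul: "supp (smul \<alpha> x) \<subseteq> supp x"
  by (auto simp: supp_def smul_def)

lemma supp_rmul_basis: "supp (rmul_basis \<tau> b x) \<subseteq> (\<lambda>a. a + b) ` supp x"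
  by (auto simp: supp_def rmul_basis_def image_iff intro!: exI[of _ "_ - b"])

lemma supp_lmul_basis: "supp (lmul_basis \<tau> r x) \<subseteq> (\<lambda>a. r + a) ` supp x"
  by (auto simp: supp_def lmul_basis_def image_iff intro!: exI[of _ "_ - r"])

lemma rsubmodule_TGA:
  fixes \<tau> :: "zvec \<Rightarrow> zvec \<Rightarrow> 'k::field"
  assumes "vgroup G"
  shows "rsubmodule G \<tau> (TGA G)"
  unfolding rsubmodule_def
proof (intro conjI ballI allI)
  fix x y :: "zvec \<Rightarrow> 'k" and b assume x: "x \<in> TGA G" and y: "y \<in> TGA G"
  then show "x + y \<in> TGA G"
    using supp_add[of x y] by (auto simp: TGA_def intro: finite_subset)
  show "smul \<alpha> x \<in> TGA G" for \<alpha>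
    using x supp_smul[of \<alpha> x] by (auto simp: TGA_def intro: finite_subset)
  assume "b \<in> G"
  then have "(\<lambda>a. a + b) ` supp x \<subseteq> G"
    using x assms by (auto simp: TGA_def vgroupD)
  then show "rmul_basis \<tau> b x \<in> TGA G"
    using x supp_rmul_basis[of \<tau> b x] by (auto simp: TGA_def intro: finite_subset)
qed (simp add: TGA_def supp_def)

lemma rsubmodule_zero: "rsubmodule B \<tau> {0}"
  by (simp add: rsubmodule_def smul_def rmul_basis_def zero_fun_def)

locale twisted_group =
  fixes G :: "zvec set" and \<tau> :: "zvec \<Rightarrow> zvec \<Rightarrow> 'k::field"
  assumes group: "vgroup G" and cocycle: "two_cocycle G \<tau>"
begin

lemma cocycle_nonzero: "a \<in> G \<Longrightarrow> b \<in> G \<Longrightarrow> \<tau> a b \<noteq> 0"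
  using cocycle by (simp add: two_cocycle_def)

lemma cocycle_identity:
  "a \<in> G \<Longrightarrow> b \<in> G \<Longrightarrow> c \<in> G \<Longrightarrow> \<tau> a b * \<tau> (a + b) c = \<tau> a (b + c) * \<tau> b c"
  using cocycle by (simp add: two_cocycle_def)

lemma cocycle_zero_right: "a \<in> G \<Longrightarrow> \<tau> a 0 = \<tau> 0 0"
  using cocycle_identity[of a 0 0] cocycle_nonzero[of a 0] group by (simp add: vgroupD)

lemma rmul_basis_zero:
  assumes "x \<in> TGA G"
  shows "rmul_basis \<tau> 0 x = smul (\<tau> 0 0) x"
proof
  fix c
  show "rmul_basis \<tau> 0 x c = smul (\<tau> 0 0) x c"
  proof (cases "c \<in> G")
    case False
    then have "x c = 0" using assms by (auto simp: TGA_def supp_def)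
    then show ?thesis by (simp add: smul_def rmul_basis_def)
  qed (simp add: smul_def rmul_basis_def cocycle_zero_right)
qed

lemma rsubmodule_if_rideal:
  assumes I: "rideal G \<tau> I"
  shows "rsubmodule G \<tau> I"
proof -
  have sub: "I \<subseteq> TGA G" and mul: "\<And>x r. x \<in> I \<Longrightarrow> r \<in> TGA G \<Longrightarrow> tmul \<tau> x r \<in> I"
    using I by (simp_all add: rideal_def)
  have fin: "finite (supp x)" if "x \<in> I" for x
    using that sub by (auto simp: TGA_def)
  have "smul \<alpha> x \<in> I" if x: "x \<in> I" for \<alpha> x
  proof -
    have basis: "basis_vec (\<alpha> / \<tau> 0 0) 0 \<in> TGA G"
      using group by (auto simp: TGA_def supp_def basis_vec_def vgroupD)
    have "smul (\<alpha> / \<tau> 0 0) (rmul_basis \<tau> 0 x) \<in> I"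
      using mul[OF x basis] by (simp add: tmul_basis_vec fin x)
    then show ?thesis
      using x sub cocycle_nonzero[of 0 0] group
      by (auto simp: rmul_basis_zero smul_def vgroupD)
  qed
  moreover have "rmul_basis \<tau> b x \<in> I" if x: "x \<in> I" and b: "b \<in> G" for b x
  proof -
    have basis: "basis_vec 1 b \<in> TGA G"
      using b by (auto simp: TGA_def supp_def basis_vec_def)
    have "smul 1 (rmul_basis \<tau> b x) \<in> I"
      using mul[OF x basis] by (simp add: tmul_basis_vec fin x)
    then show ?thesis by (simp add: smul_def)
  qed
  ultimately show ?thesis
    using I by (simp add: rideal_def rsubmodule_def)
qed

lemma rideal_if_rsubmodule:
  assumes sub: "I \<subseteq> TGA G" and I: "rsubmodule G \<tau> I"
  shows "rideal G \<tau> I"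
proof -
  have "tmul \<tau> x r \<in> I" if "x \<in> I" "r \<in> TGA G" for x r
  proof -
    have "finite (supp x)" "finite (supp r)"
      using that sub by (auto simp: TGA_def)
    then show ?thesis
      using that I by (auto simp: tmul_eq_sum_rmul_basis TGA_def rsubmodule_def intro!: rsubmodule_sum)
  qed
  moreover have "- x \<in> I" if "x \<in> I" for x
  proof -
    have "smul (- 1) x \<in> I" using that I by (simp add: rsubmodule_def)
    then show ?thesis by (simp add: smul_def fun_Compl_def)
  qed
  ultimately show ?thesis
    using sub I by (simp add: rideal_def rsubmodule_def)
qed

lemma rideal_iff: "rideal G \<tau> I \<longleftrightarrow> I \<subseteq> TGA G \<and> rsubmodule G \<tau> I"
proof
  assume I: "rideal G \<tau> I"
  then show "I \<subseteq> TGA G \<and> rsubmodule G \<tau> I"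
    using rsubmodule_if_rideal[OF I] by (simp add: rideal_def)
qed (simp add: rideal_if_rsubmodule)

lemma rideal_TGA: "rideal G \<tau> (TGA G)"
  by (simp add: rideal_iff rsubmodule_TGA group)

lemma rideal_zero: "rideal G \<tau> {0}"
  by (simp add: rideal_iff rsubmodule_zero TGA_def supp_def)

end

locale twisted_subgroup = twisted_group G \<tau> for G and \<tau> :: "zvec \<Rightarrow> zvec \<Rightarrow> 'k::field" +
  fixes H :: "zvec set"
  assumes subgroup: "subgroup_of G H"
begin

lemma subgroup_subset: "H \<subseteq> G" and subgroup_group: "vgroup H"
  using subgroup by (simp_all add: subgroup_of_iff)

sublocale sub: twisted_group H \<tau>
proof
  show "vgroup H" by (rule subgroup_group)
  show "two_cocycle H \<tau>"
    using cocycle subgroup_subset unfolding two_cocycle_def by blast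
qed

lemma add_mem_subgroup_iff: "a \<in> H \<Longrightarrow> a + t \<in> H \<longleftrightarrow> t \<in> H"
  using subgroup_group vgroupD(2)[of H a t] vgroupD(4)[of H "a + t" a] by auto

section \<open>Extension of right ideals from a subgroup\<close>

text \<open>\<open>right_coeff t x \<cdot> bar t\<close> is the part of \<open>x\<close> supported on the coset \<open>H + t\<close>.\<close>
definition right_coeff :: "zvec \<Rightarrow> (zvec \<Rightarrow> 'k::field) \<Rightarrow> zvec \<Rightarrow> 'k" where
  "right_coeff t x = (\<lambda>a. if a \<in> H then x (a + t) / \<tau> a t else 0)"

lemma right_coeff_TGA:
  assumes "finite (supp x)"
  shows "right_coeff t x \<in> TGA H"
proof -
  have "supp (right_coeff t x) \<subseteq> (\<lambda>c. c - t) ` supp x"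
    by (auto simp: supp_def right_coeff_def image_iff split: if_splits intro!: exI[of _ "_ + t"])
  moreover have "supp (right_coeff t x) \<subseteq> H"
    by (auto simp: supp_def right_coeff_def split: if_splits)
  ultimately show ?thesis
    using assms by (auto simp: TGA_def intro: finite_subset)
qed

lemma right_coeff_zero [simp]: "right_coeff t 0 = 0"
  and right_coeff_add: "right_coeff t (x + y) = right_coeff t x + right_coeff t y"
  and right_coeff_smul: "right_coeff t (smul \<alpha> x) = smul \<alpha> (right_coeff t x)"
  by (simp_all add: right_coeff_def smul_def fun_eq_iff add_divide_distrib)

lemma right_coeff_rmul_basis:
  assumes t: "t \<in> G" and b: "b \<in> G"
  shows "right_coeff t (rmul_basis \<tau> b x) = smul (\<tau> (t - b) b) (right_coeff (t - b) x)"
proof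
  fix a
  show "right_coeff t (rmul_basis \<tau> b x) a = smul (\<tau> (t - b) b) (right_coeff (t - b) x) a"
  proof (cases "a \<in> H")
    case True
    then have a: "a \<in> G" using subgroup_subset by blast
    have tb: "t - b \<in> G" using t b group by (simp add: vgroupD)
    have "\<tau> a (t - b) * \<tau> (a + t - b) b = \<tau> a t * \<tau> (t - b) b"
      using cocycle_identity[OF a tb b] by (simp add: add_diff_eq)
    moreover have "\<tau> a t \<noteq> 0" "\<tau> a (t - b) \<noteq> 0"
      using cocycle_nonzero a t tb by auto
    ultimately show ?thesis
      using True by (simp add: right_coeff_def smul_def rmul_basis_def add_diff_eq field_simps)
  qed (simp add: right_coeff_def smul_def)
qed

text \<open>The extension \<open>I \<cdot> (F * G)\<close> of a right ideal \<open>I\<close> of \<open>F * H\<close>.\<close>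
definition extend_ideal :: "(zvec \<Rightarrow> 'k::field) set \<Rightarrow> (zvec \<Rightarrow> 'k) set" where
  "extend_ideal I = {x \<in> TGA G. \<forall>t\<in>G. right_coeff t x \<in> I}"

lemma rideal_extend_ideal:
  assumes "rideal H \<tau> I"
  shows "rideal G \<tau> (extend_ideal I)"
proof -
  have I: "rsubmodule H \<tau> I" using assms by (simp add: sub.rideal_iff)
  have "rmul_basis \<tau> b x \<in> extend_ideal I" if x: "x \<in> extend_ideal I" and b: "b \<in> G" for x b
  proof -
    have "right_coeff (t - b) x \<in> I" if "t \<in> G" for t
      using x that b group by (simp add: extend_ideal_def vgroupD)
    then have "\<forall>t\<in>G. right_coeff t (rmul_basis \<tau> b x) \<in> I"
      using I b by (simp add: right_coeff_rmul_basis rsubmodule_def)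
    moreover have "rmul_basis \<tau> b x \<in> TGA G"
      using rsubmodule_TGA[OF group, where \<tau> = \<tau>] x b by (simp add: extend_ideal_def rsubmodule_def)
    ultimately show ?thesis by (simp add: extend_ideal_def)
  qed
  moreover have "rsubmodule G \<tau> (TGA G)" by (rule rsubmodule_TGA[OF group, where \<tau> = \<tau>])
  ultimately show ?thesis
    using I
    by (auto simp: rideal_iff rsubmodule_def extend_ideal_def right_coeff_add right_coeff_smul)
qed

lemma right_coeff_in_subgroup:
  assumes s: "s \<in> TGA H" and t: "t \<in> H"
  shows "right_coeff t s = smul (1 / (\<tau> 0 0 * \<tau> t (- t))) (rmul_basis \<tau> (- t) s)"
proof
  fix a
  show "right_coeff t s a = smul (1 / (\<tau> 0 0 * \<tau> t (- t))) (rmul_basis \<tau> (- t) s) a"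
  proof (cases "a \<in> H")
    case True
    then have a: "a \<in> G" and tG: "t \<in> G" and nt: "- t \<in> G" and at: "a + t \<in> G"
      using subgroup_subset t vgroupD(2,3)[OF group] by blast+
    have eq: "\<tau> a t * \<tau> (a + t) (- t) = \<tau> 0 0 * \<tau> t (- t)"
      using cocycle_identity[OF a tG nt] cocycle_zero_right[OF a] by simp
    have "\<tau> a t \<noteq> 0" "\<tau> (a + t) (- t) \<noteq> 0"
      using cocycle_nonzero a tG nt at by auto
    moreover from this have "\<tau> 0 0 * \<tau> t (- t) \<noteq> 0"
      by (simp flip: eq)
    ultimately show ?thesis
      using eq True by (simp add: right_coeff_def smul_def rmul_basis_def field_simps)
  next
    case False
    then have "a + t \<notin> H"
      using t add_mem_subgroup_iff[of t a] by (simp add: add.commute)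
    then have "s (a + t) = 0"
      using s by (auto simp: TGA_def supp_def)
    then show ?thesis
      using False by (simp add: right_coeff_def smul_def rmul_basis_def)
  qed
qed

lemma right_coeff_outside_subgroup:
  assumes "s \<in> TGA H" "t \<notin> H"
  shows "right_coeff t s = 0"
  using assms add_mem_subgroup_iff by (auto simp: right_coeff_def TGA_def supp_def fun_eq_iff)

lemma right_coeff_zero_index:
  assumes "s \<in> TGA H"
  shows "smul (\<tau> 0 0) (right_coeff 0 s) = s"
proof
  fix a
  show "smul (\<tau> 0 0) (right_coeff 0 s) a = s a"
  proof (cases "a \<in> H")
    case True
    then have "a \<in> G" using subgroup_subset by blast
    then show ?thesis
      using True cocycle_zero_right[of a] cocycle_nonzero[of 0 0] group
      by (simp add: smul_def right_coeff_def vgroupD)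
  qed (use assms in \<open>auto simp: smul_def right_coeff_def TGA_def supp_def\<close>)
qed

lemma subset_extend_ideal:
  assumes I: "rideal H \<tau> I"
  shows "I \<subseteq> extend_ideal I"
proof
  fix s assume s: "s \<in> I"
  have "s \<in> TGA H" and "rsubmodule H \<tau> I"
    using I s by (auto simp: sub.rideal_iff)
  then have "right_coeff t s \<in> I" if "t \<in> G" for t
    using s sub.group
    by (cases "t \<in> H") (auto simp: right_coeff_in_subgroup right_coeff_outside_subgroup
        rsubmodule_def vgroupD)
  moreover have "s \<in> TGA G"
    using \<open>s \<in> TGA H\<close> subgroup_subset by (auto simp: TGA_def)
  ultimately show "s \<in> extend_ideal I"
    by (simp add: extend_ideal_def)
qed

lemma extend_ideal_Int_TGA:
  assumes I: "rideal H \<tau> I"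
  shows "extend_ideal I \<inter> TGA H = I"
proof
  show "extend_ideal I \<inter> TGA H \<subseteq> I"
  proof
    fix s assume "s \<in> extend_ideal I \<inter> TGA H"
    then have "right_coeff 0 s \<in> I" "s \<in> TGA H"
      using group by (auto simp: extend_ideal_def vgroupD)
    then show "s \<in> I"
      using I right_coeff_zero_index by (metis rsubmodule_def sub.rideal_iff)
  qed
  show "I \<subseteq> extend_ideal I \<inter> TGA H"
    using subset_extend_ideal[OF I] I by (auto simp: rideal_def)
qed

lemma extend_ideal_zero: "extend_ideal {0} = {0}"
proof
  show "extend_ideal {0} \<subseteq> {0}"
  proof
    fix x assume x: "x \<in> extend_ideal {0}"
    have "x c = 0" for c
    proof (cases "c \<in> G")
      case True
      then have "right_coeff c x 0 = 0"
        using x by (auto simp: extend_ideal_def)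
      then show ?thesis
        using True cocycle_nonzero[of 0 c] sub.group group by (simp add: right_coeff_def vgroupD)
    qed (use x in \<open>auto simp: extend_ideal_def TGA_def supp_def\<close>)
    then show "x \<in> {0}" by (simp add: fun_eq_iff)
  qed
qed (simp add: extend_ideal_def TGA_def supp_def)

lemma extend_ideal_TGA: "extend_ideal (TGA H) = TGA G"
  using right_coeff_TGA by (auto simp: extend_ideal_def TGA_def)

lemma devlt_subgroup_of_group:
  assumes "devlt G \<tau> k {0} (TGA G)"
  shows "devlt H \<tau> k {0} (TGA H)"
  unfolding devlt_eq_dev_lt
proof (rule dev_lt_pullback[where f = extend_ideal])
  show "extend_ideal I \<subseteq> extend_ideal J" if "I \<subseteq> J" for I J
    using that by (auto simp: extend_ideal_def)
  show "I = J" if "I \<in> {I. rideal H \<tau> I}" "J \<in> {I. rideal H \<tau> I}" "I \<subseteq> J"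
    and "extend_ideal I = extend_ideal J" for I J
    using that extend_ideal_Int_TGA by (metis mem_Collect_eq)
  show "dev_lt {I. rideal G \<tau> I} k (extend_ideal {0}) (extend_ideal (TGA H))"
    using assms by (simp add: extend_ideal_zero extend_ideal_TGA devlt_eq_dev_lt)
qed (auto simp: rideal_extend_ideal sub.rideal_zero sub.rideal_TGA zero_in_TGA)

section \<open>Leading coefficients along a coset filtration\<close>

text \<open>\<open>bar r \<cdot> left_coeff r x\<close> is the part of \<open>x\<close> supported on the coset \<open>r + H\<close>.\<close>
definition left_coeff :: "zvec \<Rightarrow> (zvec \<Rightarrow> 'k::field) \<Rightarrow> zvec \<Rightarrow> 'k" where
  "left_coeff r x = (\<lambda>a. if a \<in> H then x (r + a) / \<tau> r a else 0)"

lemma left_coeff_TGA: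
  assumes "finite (supp x)"
  shows "left_coeff r x \<in> TGA H"
proof -
  have "supp (left_coeff r x) \<subseteq> (\<lambda>c. c - r) ` supp x"
    by (auto simp: supp_def left_coeff_def image_iff split: if_splits intro!: exI[of _ "r + _"])
  moreover have "supp (left_coeff r x) \<subseteq> H"
    by (auto simp: supp_def left_coeff_def split: if_splits)
  ultimately show ?thesis
    using assms by (auto simp: TGA_def intro: finite_subset)
qed

lemma left_coeff_zero [simp]: "left_coeff r 0 = 0"
  and left_coeff_add: "left_coeff r (x + y) = left_coeff r x + left_coeff r y"
  and left_coeff_diff: "left_coeff r (x - y) = left_coeff r x - left_coeff r y"
  and left_coeff_smul: "left_coeff r (smul \<alpha> x) = smul \<alpha> (left_coeff r x)"
  by (simp_all add: left_coeff_def smul_def fun_eq_iff add_divide_distrib diff_divide_distrib)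

lemma left_coeff_rmul_basis:
  assumes r: "r \<in> G" and b: "b \<in> H"
  shows "left_coeff r (rmul_basis \<tau> b x) = rmul_basis \<tau> b (left_coeff r x)"
proof
  fix a
  show "left_coeff r (rmul_basis \<tau> b x) a = rmul_basis \<tau> b (left_coeff r x) a"
  proof (cases "a \<in> H")
    case True
    then have ab: "a - b \<in> H" using b sub.group by (simp add: vgroupD)
    then have a: "a \<in> G" and abG: "a - b \<in> G" and bG: "b \<in> G"
      using True b subgroup_subset by blast+
    have "\<tau> r (a - b) * \<tau> (r + a - b) b = \<tau> r a * \<tau> (a - b) b"
      using cocycle_identity[OF r abG bG] by (simp add: add_diff_eq)
    moreover have "\<tau> r a \<noteq> 0" "\<tau> r (a - b) \<noteq> 0"
      using cocycle_nonzero r a abG by auto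
    ultimately show ?thesis
      using True ab by (simp add: left_coeff_def rmul_basis_def add_diff_eq field_simps)
  next
    case False
    then have "a - b \<notin> H"
      using b add_mem_subgroup_iff[of b "a - b"] by simp
    then show ?thesis
      using False by (simp add: left_coeff_def rmul_basis_def)
  qed
qed

lemma left_coeff_lmul_basis:
  assumes r: "r \<in> G" and s: "s \<in> TGA H"
  shows "left_coeff r (lmul_basis \<tau> r s) = s"
proof
  fix a
  show "left_coeff r (lmul_basis \<tau> r s) a = s a"
  proof (cases "a \<in> H")
    case True
    then have "\<tau> r a \<noteq> 0"
      using cocycle_nonzero r subgroup_subset by blast
    then show ?thesis
      using True by (simp add: left_coeff_def lmul_basis_def)
  qed (use s in \<open>auto simp: left_coeff_def TGA_def supp_def\<close>)
qed

lemma lmul_basis_TGA: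
  assumes r: "r \<in> G" and s: "s \<in> TGA H"
  shows "lmul_basis \<tau> r s \<in> TGA G"
proof -
  have "(\<lambda>a. r + a) ` supp s \<subseteq> G"
    using s r subgroup_subset group by (auto simp: TGA_def vgroupD)
  then show ?thesis
    using s supp_lmul_basis[of \<tau> r s] by (auto simp: TGA_def intro: finite_subset)
qed

end

locale coset_covering = twisted_subgroup G \<tau> H
  for G and \<tau> :: "zvec \<Rightarrow> zvec \<Rightarrow> 'k::field" and H +
  fixes m :: nat and r :: "nat \<Rightarrow> zvec"
  assumes rep_mem: "j < m \<Longrightarrow> r j \<in> G"
    and covering: "c \<in> G \<Longrightarrow> \<exists>j<m. c - r j \<in> H"
begin

text \<open>A decreasing filtration of \<open>F * G\<close> by right \<open>F * H\<close>-submodules whose \<open>j\<close>-th subquotient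
  embeds into \<open>F * H\<close> via \<open>left_coeff (r j)\<close>. The cosets \<open>r i + H\<close> need not be distinct.\<close>
definition filtration :: "nat \<Rightarrow> (zvec \<Rightarrow> 'k::field) set" where
  "filtration j = {x \<in> TGA G. supp x \<subseteq> {c. \<exists>i. j \<le> i \<and> i < m \<and> c - r i \<in> H}}"

definition leading_coeffs :: "(zvec \<Rightarrow> 'k::field) set \<Rightarrow> nat \<Rightarrow> (zvec \<Rightarrow> 'k) set" where
  "leading_coeffs J j = left_coeff (r j) ` (J \<inter> filtration j)"

definition graded :: "(zvec \<Rightarrow> 'k::field) set \<Rightarrow> (nat \<times> (zvec \<Rightarrow> 'k)) set" where
  "graded J = {(j, y). j < m \<and> y \<in> leading_coeffs J j}"

lemma rsubmodule_filtration: "rsubmodule H \<tau> (filtration j)"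
proof -
  let ?U = "{c. \<exists>i. j \<le> i \<and> i < m \<and> c - r i \<in> H}"
  have shift: "(\<lambda>a. a + b) ` ?U \<subseteq> ?U" if b: "b \<in> H" for b
  proof (rule image_subsetI, clarify)
    fix a i assume "j \<le> i" "i < m" "a - r i \<in> H"
    moreover have "a + b - r i = (a - r i) + b" by simp
    ultimately show "\<exists>i'. j \<le> i' \<and> i' < m \<and> a + b - r i' \<in> H"
      using b vgroupD(2)[OF sub.group] by metis
  qed
  have "supp (rmul_basis \<tau> b x) \<subseteq> ?U" if "supp x \<subseteq> ?U" "b \<in> H" for b x
    using supp_rmul_basis[of \<tau> b x] image_mono[OF that(1), of "\<lambda>a. a + b"] shift[OF that(2)]
    by (meson order_trans)
  moreover have "supp (x + y) \<subseteq> ?U" if "supp x \<subseteq> ?U" "supp y \<subseteq> ?U" for x y :: "zvec \<Rightarrow> 'k"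
    using that supp_add[of x y] by (meson Un_least order_trans)
  moreover have "supp (smul \<alpha> x) \<subseteq> ?U" if "supp x \<subseteq> ?U" for \<alpha> and x :: "zvec \<Rightarrow> 'k"
    using that supp_smul[of \<alpha> x] by (meson order_trans)
  moreover have "supp (0 :: zvec \<Rightarrow> 'k) \<subseteq> ?U"
    by (simp add: supp_def)
  moreover have "rsubmodule H \<tau> (TGA G)"
    using rsubmodule_TGA[OF group, where \<tau> = \<tau>] subgroup_subset by (rule rsubmodule_mono)
  ultimately show ?thesis
    unfolding rsubmodule_def filtration_def by simp
qed

lemma rideal_leading_coeffs:
  assumes J: "rideal G \<tau> J" and j: "j < m"
  shows "rideal H \<tau> (leading_coeffs J j)"
proof -
  have "rsubmodule H \<tau> (J \<inter> filtration j)"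
    using J subgroup_subset rsubmodule_filtration
    by (auto simp: rideal_iff intro: rsubmodule_Int rsubmodule_mono)
  then have "rsubmodule H \<tau> (leading_coeffs J j)"
    unfolding leading_coeffs_def
    using rep_mem[OF j]
    by (intro rsubmodule_image) (auto simp: left_coeff_add left_coeff_smul left_coeff_rmul_basis)
  moreover have "left_coeff (r j) x \<in> TGA H" if "x \<in> J" for x
    using that J by (intro left_coeff_TGA) (auto simp: rideal_def TGA_def)
  then have "leading_coeffs J j \<subseteq> TGA H"
    by (auto simp: leading_coeffs_def)
  ultimately show ?thesis by (simp add: sub.rideal_iff)
qed

lemma filtration_Suc:
  assumes z: "z \<in> filtration j" and j: "j < m" and lead: "left_coeff (r j) z = 0"
  shows "z \<in> filtration (Suc j)"
proof -
  have "\<exists>i. Suc j \<le> i \<and> i < m \<and> c - r i \<in> H" if c: "c \<in> supp z" for c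
  proof -
    obtain i where i: "j \<le> i" "i < m" "c - r i \<in> H"
      using z c by (auto simp: filtration_def)
    have "i \<noteq> j"
    proof
      assume "i = j"
      then have "\<tau> (r j) (c - r j) \<noteq> 0"
        using cocycle_nonzero rep_mem[OF j] i subgroup_subset by blast
      moreover have "left_coeff (r j) z (c - r j) = z c / \<tau> (r j) (c - r j)"
        using i \<open>i = j\<close> by (simp add: left_coeff_def)
      ultimately show False
        using c lead by (simp add: supp_def)
    qed
    then show ?thesis using i by (auto intro!: exI[of _ i])
  qed
  then show ?thesis using z by (auto simp: filtration_def)
qed

lemma filtration_0: "filtration 0 = TGA G"
  using covering by (auto simp: filtration_def TGA_def)

lemma filtration_m: "filtration m = {0}"
  by (fastforce simp: filtration_def supp_def zero_in_TGA)

lemma graded_subset: "graded J \<subseteq> {..<m} \<times> UNIV"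
  by (auto simp: graded_def)

lemma fiber_graded: "j < m \<Longrightarrow> fiber (graded J) j = leading_coeffs J j"
  by (simp add: fiber_def graded_def)

lemma leading_coeffs_zero: "leading_coeffs {0} j = {0}"
  by (auto simp: leading_coeffs_def filtration_def zero_in_TGA supp_def)

lemma leading_coeffs_TGA:
  assumes j: "j < m"
  shows "leading_coeffs (TGA G) j = TGA H"
proof
  show "leading_coeffs (TGA G) j \<subseteq> TGA H"
    unfolding leading_coeffs_def by (rule image_subsetI, rule left_coeff_TGA) (simp add: TGA_def)
  show "TGA H \<subseteq> leading_coeffs (TGA G) j"
  proof
    fix s :: "zvec \<Rightarrow> 'k" assume s: "s \<in> TGA H"
    have "supp (lmul_basis \<tau> (r j) s) \<subseteq> {c. \<exists>i. j \<le> i \<and> i < m \<and> c - r i \<in> H}"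
      using supp_lmul_basis[of \<tau> "r j" s] s j by (fastforce simp: TGA_def)
    then have "lmul_basis \<tau> (r j) s \<in> TGA G \<inter> filtration j"
      using lmul_basis_TGA[OF rep_mem[OF j] s] by (simp add: filtration_def)
    then show "s \<in> leading_coeffs (TGA G) j"
      unfolding leading_coeffs_def
      using left_coeff_lmul_basis[OF rep_mem[OF j] s] by (metis image_eqI)
  qed
qed

text \<open>Subtracting an element of \<open>J\<close> with the same leading coefficient pushes an element of \<open>J'\<close>
  one step down the filtration.\<close>
lemma graded_step:
  assumes J: "rideal G \<tau> J" and J': "rideal G \<tau> J'" and "J \<subseteq> J'" and j: "j < m"
    and lead: "leading_coeffs J j = leading_coeffs J' j"
    and below: "J' \<inter> filtration (Suc j) \<subseteq> J"
  shows "J' \<inter> filtration j \<subseteq> J"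
proof
  fix x assume x: "x \<in> J' \<inter> filtration j"
  then have "left_coeff (r j) x \<in> leading_coeffs J j"
    using lead by (simp add: leading_coeffs_def)
  then obtain y where y: "y \<in> J" "y \<in> filtration j" "left_coeff (r j) y = left_coeff (r j) x"
    by (auto simp: leading_coeffs_def)
  have "rsubmodule G \<tau> J" "rsubmodule G \<tau> J'"
    using J J' by (simp_all add: rideal_iff)
  then have "x - y \<in> J'" "x = (x - y) + y"
    using x y \<open>J \<subseteq> J'\<close> by (auto intro: rsubmodule_diff)
  moreover have "x - y \<in> filtration (Suc j)"
    using x y j rsubmodule_filtration
    by (intro filtration_Suc) (auto simp: left_coeff_diff intro: rsubmodule_diff)
  ultimately show "x \<in> J"
    using below y \<open>rsubmodule G \<tau> J\<close> by (metis IntI rsubmodule_def subsetD)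
qed

lemma graded_inj:
  assumes J: "rideal G \<tau> J" and J': "rideal G \<tau> J'" and "J \<subseteq> J'" and "graded J = graded J'"
  shows "J = J'"
proof -
  have lead: "leading_coeffs J j = leading_coeffs J' j" if "j < m" for j
    using assms(4) fiber_graded that by metis
  have "J' \<inter> filtration 0 \<subseteq> J"
  proof (rule inc_induct[of 0 m])
    show "J' \<inter> filtration m \<subseteq> J"
      using J by (auto simp: filtration_m rideal_def)
    show "J' \<inter> filtration j \<subseteq> J" if "j < m" "J' \<inter> filtration (Suc j) \<subseteq> J" for j
      using graded_step[OF J J' \<open>J \<subseteq> J'\<close>] lead that by blast
  qed simp
  then show ?thesis
    using J' \<open>J \<subseteq> J'\<close> by (auto simp: filtration_0 rideal_def)
qed

lemma devlt_group_of_subgroup: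
  assumes "devlt H \<tau> k {0} (TGA H)"
  shows "devlt G \<tau> k {0} (TGA G)"
  unfolding devlt_eq_dev_lt
proof (rule dev_lt_pullback[where f = graded
      and Q = "{X. X \<subseteq> {..<m} \<times> UNIV \<and> (\<forall>j<m. fiber X j \<in> {I. rideal H \<tau> I})}"])
  show "graded J \<in> {X. X \<subseteq> {..<m} \<times> UNIV \<and> (\<forall>j<m. fiber X j \<in> {I. rideal H \<tau> I})}"
    if "J \<in> {I. rideal G \<tau> I}" for J
    using that by (simp add: graded_subset fiber_graded rideal_leading_coeffs)
  show "graded I \<subseteq> graded J" if "I \<subseteq> J" for I J
    using that by (auto simp: graded_def leading_coeffs_def)
  show "I = J" if "I \<in> {I. rideal G \<tau> I}" "J \<in> {I. rideal G \<tau> I}" "I \<subseteq> J"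
    and "graded I = graded J" for I J
    using that graded_inj by blast
  show "dev_lt {X. X \<subseteq> {..<m} \<times> UNIV \<and> (\<forall>j<m. fiber X j \<in> {I. rideal H \<tau> I})} k
      (graded {0}) (graded (TGA G))"
    using assms graded_subset
    by (intro dev_lt_product) (simp_all add: fiber_graded leading_coeffs_zero leading_coeffs_TGA
        devlt_eq_dev_lt)
qed (auto simp: rideal_zero rideal_TGA zero_in_TGA)

end

lemma finite_index_imp_covering:
  assumes H: "subgroup_of G H" and fin: "finite_index G H"
  obtains m :: nat and r :: "nat \<Rightarrow> zvec"
  where "\<forall>j<m. r j \<in> G" and "\<forall>c\<in>G. \<exists>j<m. c - r j \<in> H"
proof -
  define coset where "coset a = {a + h | h. h \<in> H}" for a
  have "finite (coset ` G)"
    using fin by (simp add: finite_index_def coset_def)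
  then obtain R where R: "R \<subseteq> G" "finite R" "coset ` R = coset ` G"
    using finite_subset_image[OF _ order_refl] by metis
  have "\<exists>a\<in>R. c - a \<in> H" if c: "c \<in> G" for c
  proof -
    obtain a where a: "a \<in> R" "coset c = coset a"
      using R c by (metis imageE imageI)
    have "0 \<in> H"
      using H by (simp add: subgroup_of_def)
    then have "c \<in> coset a"
      unfolding a(2)[symmetric] by (simp add: coset_def)
    then have "c - a \<in> H"
      by (auto simp: coset_def)
    then show ?thesis
      using a(1) by blast
  qed
  moreover obtain xs where xs: "set xs = R"
    using finite_list[OF \<open>finite R\<close>] by blast
  ultimately show ?thesis
  proof (intro that[of "length xs" "(!) xs"])
    show "\<forall>j<length xs. xs ! j \<in> G"
      using R(1) xs nth_mem by blast
    show "\<forall>c\<in>G. \<exists>j<length xs. c - xs ! j \<in> H" if "\<And>c. c \<in> G \<Longrightarrow> \<exists>a\<in>R. c - a \<in> H"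
      using that xs by (metis in_set_conv_nth)
  qed
qed

context twisted_subgroup
begin

theorem Kdim_finite_index:
  assumes "finite_index G H"
  shows "Kdim H \<tau> = Kdim G \<tau>"
proof -
  obtain m :: nat and r :: "nat \<Rightarrow> zvec" where "\<forall>j<m. r j \<in> G" "\<forall>c\<in>G. \<exists>j<m. c - r j \<in> H"
    using finite_index_imp_covering[OF subgroup assms] by blast
  then interpret coset_covering G \<tau> H m r
    by unfold_locales auto
  have "devlt H \<tau> k {0} (TGA H) \<longleftrightarrow> devlt G \<tau> k {0} (TGA G)" for k
    using devlt_subgroup_of_group devlt_group_of_subgroup by blast
  then show ?thesis by (simp only: Kdim_def algebra_ops_eq)
qed

end

theorem corollary5p2:
  fixes \<tau> :: "zvec \<Rightarrow> zvec \<Rightarrow> 'k::field" and n :: nat and A' :: "zvec set"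
  assumes "two_cocycle (Zn n) \<tau>"
    and "subgroup_of (Zn n) A'"
    and "finite_index (Zn n) A'"
  shows "Kdim A' \<tau> = Kdim (Zn n) \<tau>"
proof -
  interpret twisted_subgroup "Zn n" \<tau> A'
    using assms(1,2) vgroup_Zn by unfold_locales
  show ?thesis using Kdim_finite_index assms(3) .
qed

end
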